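(* Let $f_i$ and $f_j$ be two finite set (random finite set) densities on the finite subsets of $\mathbb{R}^d$, with cardinality probability mass functions $p_i,p_j$ on $\{0,1,2,\ldots\}$ and localisation densities $\rho_{i,n},\rho_{j,n}$ ($n\ge 1$), and let $\omega\in[0,1]$. Let $z_\omega(n)$, $N_\omega$ and the fused cardinality pmf $p_\omega$ be as defined in the context. Fix a cardinality $n$. Then the inconsistency condition $$p_\omega(n)<\min\{p_i(n),p_j(n)\}$$ holds if $$z_\omega(n)<\frac{\sum_{n'\neq n} p_i^{(1-\omega)}(n')\,p_j^{\omega}(n')\,z_\omega(n')}{\dfrac{p_i^{(1-\omega)}(n)\,p_j^{\omega}(n)}{\min\{p_i(n),p_j(n)\}}-p_i^{(1-\omega)}(n)\,p_j^{\omega}(n)},$$ where the right-hand side is assumed to be well defined (i.e. $\min\{p_i(n),p_j(n)\}>0$ and the denominator is nonzero).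
   Context: A finite set density $f$ on finite subsets $X=\{x_1,\ldots,x_n\}\subset\mathbb{R}^d$ is written $f(X)=p(|X|)\,n!\,\rho_n(x_1,\ldots,x_n)$, where $p$ is a probability mass function on $\{0,1,2,\ldots\}$ (the cardinality distribution) and, for each $n\ge1$, $\rho_n$ is a probability density on $(\mathbb{R}^d)^n$ symmetric in its arguments (the localisation density). For $f_i=(p_i,\{\rho_{i,n}\})$, $f_j=(p_j,\{\rho_{j,n}\})$ and $\omega\in[0,1]$, define $z_\omega(0)=1$ and for $n\ge1$ $$z_\omega(n)=\int_{(\mathbb{R}^d)^n}\rho_{i,n}^{(1-\omega)}(x_1,\ldots,x_n)\,\rho_{j,n}^{\omega}(x_1,\ldots,x_n)\,\mathrm{d}x_1\cdots\mathrm{d}x_n,$$ $$N_\omega=\sum_{n'=0}^\infty p_i^{(1-\omega)}(n')\,p_j^{\omega}(n')\,z_\omega(n'),\qquad p_\omega(n)=\frac{1}{N_\omega}p_i^{(1-\omega)}(n)\,p_j^{\omega}(n)\,z_\omega(n).$$ $p_\omega$ is the cardinality distribution of the exponential mixture density (normalised weighted geometric mean) $f_\omega\propto f_i^{1-\omega}f_j^{\omega}$, normalised with respect to the set integral. *)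

theory Defs
  imports "HOL-Analysis.Analysis" "HOL-Combinatorics.Permutations"
begin

text \<open>Real power with the convention x^0 = 1 (also for x = 0), as in the paper.\<close>
definition pw :: "real \<Rightarrow> real \<Rightarrow> real" where
  "pw x a = (if a = 0 then 1 else x powr a)"

text \<open>(R^d)^n is modelled as functions {..<n} \<Rightarrow> 'a with Lebesgue (product) measure.\<close>
abbreviation tuple_measure :: "nat \<Rightarrow> (nat \<Rightarrow> 'a::euclidean_space) measure" where
  "tuple_measure n \<equiv> PiM {..<n} (\<lambda>_. lborel)"

definition loc_density :: "nat \<Rightarrow> ((nat \<Rightarrow> 'a::euclidean_space) \<Rightarrow> real) \<Rightarrow> bool" where
  "loc_density n r \<longleftrightarrow>
     r \<in> borel_measurable (tuple_measure n) \<and>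
     (\<forall>x \<in> space (tuple_measure n). 0 \<le> r x) \<and>
     integrable (tuple_measure n) r \<and>
     integral\<^sup>L (tuple_measure n) r = 1 \<and>
     (\<forall>\<sigma>. \<sigma> permutes {..<n} \<longrightarrow> (\<forall>x \<in> space (tuple_measure n). r (x \<circ> \<sigma>) = r x))"

text \<open>A finite set density given by cardinality pmf p and localisation densities \<rho> n (n \<ge> 1).\<close>
definition fisst_density :: "(nat \<Rightarrow> real) \<Rightarrow> (nat \<Rightarrow> (nat \<Rightarrow> 'a::euclidean_space) \<Rightarrow> real) \<Rightarrow> bool" where
  "fisst_density p \<rho> \<longleftrightarrow> (\<forall>n. 0 \<le> p n) \<and> p sums 1 \<and> (\<forall>n\<ge>1. loc_density n (\<rho> n))"

definition z_omega :: "real \<Rightarrow> (nat \<Rightarrow> (nat \<Rightarrow> 'a::euclidean_space) \<Rightarrow> real)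
    \<Rightarrow> (nat \<Rightarrow> (nat \<Rightarrow> 'a) \<Rightarrow> real) \<Rightarrow> nat \<Rightarrow> real" where
  "z_omega \<omega> \<rho>i \<rho>j n = (if n = 0 then 1 else
     integral\<^sup>L (tuple_measure n) (\<lambda>x. pw (\<rho>i n x) (1 - \<omega>) * pw (\<rho>j n x) \<omega>))"

definition N_omega :: "real \<Rightarrow> (nat \<Rightarrow> real) \<Rightarrow> (nat \<Rightarrow> (nat \<Rightarrow> 'a::euclidean_space) \<Rightarrow> real)
    \<Rightarrow> (nat \<Rightarrow> real) \<Rightarrow> (nat \<Rightarrow> (nat \<Rightarrow> 'a) \<Rightarrow> real) \<Rightarrow> real" where
  "N_omega \<omega> pI \<rho>i pJ \<rho>j = (\<Sum>n'. pw (pI n') (1 - \<omega>) * pw (pJ n') \<omega> * z_omega \<omega> \<rho>i \<rho>j n')"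

definition p_omega :: "real \<Rightarrow> (nat \<Rightarrow> real) \<Rightarrow> (nat \<Rightarrow> (nat \<Rightarrow> 'a::euclidean_space) \<Rightarrow> real)
    \<Rightarrow> (nat \<Rightarrow> real) \<Rightarrow> (nat \<Rightarrow> (nat \<Rightarrow> 'a) \<Rightarrow> real) \<Rightarrow> nat \<Rightarrow> real" where
  "p_omega \<omega> pI \<rho>i pJ \<rho>j n =
     pw (pI n) (1 - \<omega>) * pw (pJ n) \<omega> * z_omega \<omega> \<rho>i \<rho>j n / N_omega \<omega> pI \<rho>i pJ \<rho>j"

end

theory Submission
  imports Defs
begin

text \<open>Let \<open>g k = p\<^sub>i(k)\<^sup>1\<^sup>-\<^sup>\<omega> p\<^sub>j(k)\<^sup>\<omega> z\<^sub>\<omega>(k)\<close>, so that \<open>p\<^sub>\<omega>(n) = g n / \<Sum>\<^sub>k g k\<close>, and let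
  \<open>m = min p\<^sub>i(n) p\<^sub>j(n)\<close>. Multiplying the hypothesis by its denominator, which is
  positive because \<open>m < 1\<close>, turns it into \<open>g n (1 - m) < m \<Sum>\<^sub>k\<^sub>\<noteq>\<^sub>n g k\<close>, that is
  \<open>g n < m \<Sum>\<^sub>k g k\<close>. The only analytic input is convergence of \<open>\<Sum>\<^sub>k g k\<close>: by weighted
  AM-GM, \<open>z\<^sub>\<omega>(k) \<le> 1\<close> and \<open>g k \<le> (1 - \<omega>) p\<^sub>i(k) + \<omega> p\<^sub>j(k)\<close>.\<close>

lemma pw_nonneg: "0 \<le> x \<Longrightarrow> 0 \<le> pw x e"
  by (simp add: pw_def)

lemma pw_pos: "0 < x \<Longrightarrow> 0 < pw x e"
  by (simp add: pw_def)

lemma pw_weighted_AM_GM: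
  assumes "0 \<le> x" "0 \<le> y" "0 \<le> w" "w \<le> 1"
  shows "pw x (1 - w) * pw y w \<le> (1 - w) * x + w * y"
proof -
  consider "w = 0" | "w = 1" | "0 < w" "w < 1" "x = 0 \<or> y = 0" | "0 < w" "w < 1" "x \<noteq> 0" "y \<noteq> 0"
    using assms by linarith
  then show ?thesis
  proof cases
    case 4
    then have "x powr (1 - w) * y powr w \<le> (1 - w) * x + w * y"
      using assms by (intro Youngs_inequality_0) auto
    then show ?thesis using 4 by (simp add: pw_def)
  qed (use assms in \<open>auto simp: pw_def\<close>)
qed

lemma fisst_density_card_le_one:
  assumes "fisst_density p \<rho>"
  shows "p n \<le> 1"
proof -
  have nonneg: "\<forall>k. 0 \<le> p k" and sums: "p sums 1"
    using assms by (auto simp: fisst_density_def)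
  have "sum p {n} \<le> suminf p"
    using nonneg sums by (intro sum_le_suminf) (auto simp: sums_summable)
  then show ?thesis using sums sums_unique by fastforce
qed

lemma z_omega_nonneg:
  assumes "\<forall>k\<ge>1. loc_density k (\<rho>i k)" "\<forall>k\<ge>1. loc_density k (\<rho>j k)"
  shows "0 \<le> z_omega \<omega> \<rho>i \<rho>j n"
proof (cases "n = 0")
  case False
  then have "AE x in tuple_measure n. 0 \<le> pw (\<rho>i n x) (1 - \<omega>) * pw (\<rho>j n x) \<omega>"
    using assms by (intro AE_I2) (auto simp: loc_density_def intro!: mult_nonneg_nonneg pw_nonneg)
  then show ?thesis using False by (simp add: z_omega_def integral_nonneg_AE)
qed (simp add: z_omega_def)

lemma z_omega_le_one:
  assumes "\<forall>k\<ge>1. loc_density k (\<rho>i k)" "\<forall>k\<ge>1. loc_density k (\<rho>j k)"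
    and "0 \<le> \<omega>" "\<omega> \<le> 1"
  shows "z_omega \<omega> \<rho>i \<rho>j n \<le> 1"
proof (cases "n = 0")
  case False
  have li: "loc_density n (\<rho>i n)" and lj: "loc_density n (\<rho>j n)"
    using assms False by auto
  let ?h = "\<lambda>x. pw (\<rho>i n x) (1 - \<omega>) * pw (\<rho>j n x) \<omega>"
  have "integral\<^sup>L (tuple_measure n) ?h \<le> 1"
  proof (cases "integrable (tuple_measure n) ?h")
    case True
    have "integral\<^sup>L (tuple_measure n) ?h \<le>
          integral\<^sup>L (tuple_measure n) (\<lambda>x. (1 - \<omega>) * \<rho>i n x + \<omega> * \<rho>j n x)"
      using True li lj assms by (intro integral_mono pw_weighted_AM_GM) (auto simp: loc_density_def)
    also have "\<dots> = 1" using li lj by (simp add: loc_density_def)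
    finally show ?thesis .
  qed (simp add: not_integrable_integral_eq)
  then show ?thesis using False by (simp add: z_omega_def)
qed (simp add: z_omega_def)

lemma summable_fused_weights:
  assumes fi: "fisst_density pI \<rho>i" and fj: "fisst_density pJ \<rho>j"
    and \<omega>: "0 \<le> \<omega>" "\<omega> \<le> 1"
  shows "summable (\<lambda>k. pw (pI k) (1 - \<omega>) * pw (pJ k) \<omega> * z_omega \<omega> \<rho>i \<rho>j k)"
proof (rule summable_comparison_test)
  have pI: "\<forall>k. 0 \<le> pI k" "pI sums 1" and pJ: "\<forall>k. 0 \<le> pJ k" "pJ sums 1"
    and li: "\<forall>k\<ge>1. loc_density k (\<rho>i k)" and lj: "\<forall>k\<ge>1. loc_density k (\<rho>j k)"
    using fi fj by (auto simp: fisst_density_def)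
  show "\<exists>N. \<forall>k\<ge>N. norm (pw (pI k) (1 - \<omega>) * pw (pJ k) \<omega> * z_omega \<omega> \<rho>i \<rho>j k)
                     \<le> (1 - \<omega>) * pI k + \<omega> * pJ k"
  proof (intro exI allI impI)
    fix k
    have a: "0 \<le> pw (pI k) (1 - \<omega>) * pw (pJ k) \<omega>"
      using pI pJ by (intro mult_nonneg_nonneg pw_nonneg) auto
    have z: "0 \<le> z_omega \<omega> \<rho>i \<rho>j k" "z_omega \<omega> \<rho>i \<rho>j k \<le> 1"
      using z_omega_nonneg[OF li lj] z_omega_le_one[OF li lj \<omega>] by auto
    have "norm (pw (pI k) (1 - \<omega>) * pw (pJ k) \<omega> * z_omega \<omega> \<rho>i \<rho>j k)
          \<le> pw (pI k) (1 - \<omega>) * pw (pJ k) \<omega>"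
      using a z by (simp add: abs_of_nonneg mult_left_le)
    also have "\<dots> \<le> (1 - \<omega>) * pI k + \<omega> * pJ k"
      using pI pJ \<omega> by (intro pw_weighted_AM_GM) auto
    finally show "norm (pw (pI k) (1 - \<omega>) * pw (pJ k) \<omega> * z_omega \<omega> \<rho>i \<rho>j k)
                    \<le> (1 - \<omega>) * pI k + \<omega> * pJ k" .
  qed
  show "summable (\<lambda>k. (1 - \<omega>) * pI k + \<omega> * pJ k)"
    using pI pJ by (intro summable_add summable_mult) (auto simp: sums_summable)
qed

lemma suminf_split_single:
  fixes g :: "nat \<Rightarrow> 'a::real_normed_vector"
  assumes "summable g"
  shows "suminf g = g n + (\<Sum>k. if k = n then 0 else g k)"
proof -
  have "(\<lambda>k. g k - (if k = n then g k else 0)) sums (suminf g - g n)"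
    using assms sums_single[of n g] by (intro sums_diff) (auto simp: summable_sums)
  moreover have "(\<lambda>k. g k - (if k = n then g k else 0)) = (\<lambda>k. if k = n then 0 else g k)"
    by auto
  ultimately show ?thesis by (simp add: sums_iff)
qed

lemma normalised_weight_less:
  fixes g :: "nat \<Rightarrow> real"
  assumes "summable g" "\<forall>k. 0 \<le> g k" "0 < m"
    and "g n * (1 - m) < m * (\<Sum>k. if k = n then 0 else g k)"
  shows "g n / suminf g < m"
proof -
  have split: "suminf g = g n + (\<Sum>k. if k = n then 0 else g k)"
    using assms(1) by (rule suminf_split_single)
  then have less: "g n < m * suminf g"
    using assms(4) by (simp add: algebra_simps)
  have "0 \<le> suminf g"
    using assms(1,2) by (simp add: suminf_nonneg)
  then consider "suminf g = 0" | "0 < suminf g" by linarith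
  then show ?thesis
  proof cases
    case 2
    then show ?thesis using less by (simp add: pos_divide_less_eq mult.commute)
  qed (simp add: \<open>0 < m\<close>)
qed

theorem proposition1:
  fixes pI pJ :: "nat \<Rightarrow> real"
    and \<rho>i \<rho>j :: "nat \<Rightarrow> (nat \<Rightarrow> 'a::euclidean_space) \<Rightarrow> real"
    and \<omega> :: real and n :: nat
  assumes fi: "fisst_density pI \<rho>i"
    and fj: "fisst_density pJ \<rho>j"
    and \<omega>: "0 \<le> \<omega>" "\<omega> \<le> 1"
    and min_pos: "min (pI n) (pJ n) > 0"
    and denom_nz: "pw (pI n) (1 - \<omega>) * pw (pJ n) \<omega> / min (pI n) (pJ n)
                     - pw (pI n) (1 - \<omega>) * pw (pJ n) \<omega> \<noteq> 0"
    and cond: "z_omega \<omega> \<rho>i \<rho>j n <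
       (\<Sum>n'. if n' = n then 0 else pw (pI n') (1 - \<omega>) * pw (pJ n') \<omega> * z_omega \<omega> \<rho>i \<rho>j n')
       / (pw (pI n) (1 - \<omega>) * pw (pJ n) \<omega> / min (pI n) (pJ n)
          - pw (pI n) (1 - \<omega>) * pw (pJ n) \<omega>)"
  shows "p_omega \<omega> pI \<rho>i pJ \<rho>j n < min (pI n) (pJ n)"
proof -
  define g where "g k = pw (pI k) (1 - \<omega>) * pw (pJ k) \<omega> * z_omega \<omega> \<rho>i \<rho>j k" for k
  define a where "a = pw (pI n) (1 - \<omega>) * pw (pJ n) \<omega>"
  define m where "m = min (pI n) (pJ n)"
  have li: "\<forall>k\<ge>1. loc_density k (\<rho>i k)" and lj: "\<forall>k\<ge>1. loc_density k (\<rho>j k)"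
    and pI: "\<forall>k. 0 \<le> pI k" and pJ: "\<forall>k. 0 \<le> pJ k"
    using fi fj by (auto simp: fisst_density_def)
  have g_nonneg: "\<forall>k. 0 \<le> g k"
    using pI pJ z_omega_nonneg[OF li lj] by (auto simp: g_def intro!: mult_nonneg_nonneg pw_nonneg)
  have "0 < a" "0 < m"
    using min_pos by (auto simp: a_def m_def intro!: mult_pos_pos pw_pos)
  moreover have "m \<noteq> 1"
    using denom_nz unfolding a_def[symmetric] m_def[symmetric] by auto
  then have "m < 1"
    using fisst_density_card_le_one[OF fi, of n] by (auto simp: m_def)
  ultimately have denom: "a / m - a = a * (1 - m) / m" and "0 < a * (1 - m) / m"
    by (simp_all add: field_simps)
  moreover have "z_omega \<omega> \<rho>i \<rho>j n < (\<Sum>k. if k = n then 0 else g k) / (a / m - a)"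
    using cond unfolding a_def[symmetric] m_def[symmetric] g_def[symmetric] .
  ultimately have "z_omega \<omega> \<rho>i \<rho>j n * (a * (1 - m) / m) < (\<Sum>k. if k = n then 0 else g k)"
    by (metis pos_less_divide_eq)
  then have "g n * (1 - m) < m * (\<Sum>k. if k = n then 0 else g k)"
    using \<open>0 < m\<close> by (simp add: g_def a_def field_simps)
  then have "g n / suminf g < m"
    using summable_fused_weights[OF fi fj \<omega>] g_nonneg \<open>0 < m\<close>
    by (intro normalised_weight_less) (simp_all add: g_def)
  then show ?thesis
    by (simp add: p_omega_def N_omega_def g_def[abs_def] m_def)
qed

end
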